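(* Let $n\ge2$, let $p>2$ be prime, $M=(p-1)/2$, and $\delta>0$. Let $z_j^{(i)}$, $\tilde z_j^{(i)}\in\mathbb{Q}_{(M,\delta)}$ (for $i\in\{1,2\}$, $j\in\{1,\dots,n\}$) and $\tilde r=\frac{1}{n-1}\sum_{j=1}^n\tilde z_j^{(1)}\tilde z_j^{(2)}$ be as in the context. Suppose $R\in\mathbb{R}$ satisfies $|\tilde z_j^{(i)}|\le R$ for all $i,j$, and $R\le n/\delta$. If $M\ge\frac{n-1}{\delta^2}+n\left(\frac{R}{\delta}+\frac14\right)$, then $$\tilde r=\frac{1}{n-1}\,\varphi_{\delta^2}^{-1}\Big(\sum_{j=1}^n\varphi_\delta(\tilde z_j^{(1)})\,\varphi_\delta(\tilde z_j^{(2)})\Big),$$ where the sum and products inside $\varphi_{\delta^2}^{-1}$ are computed in $\mathbb{F}_p$.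
   Context: For $\gamma>0$, $\mathbb{Q}_{(M,\gamma)}=\{x\gamma: x\in\mathbb{Z},\ -M\le x\le M\}$ and $\varphi_\gamma:\mathbb{Q}_{(M,\gamma)}\to\mathbb{F}_p$, $\varphi_\gamma(x\gamma)=x\bmod p$; with $M=(p-1)/2$ this is a bijection with inverse $\varphi_\gamma^{-1}(y)=\gamma\psi(y)$, where, representing $y$ by an integer in $\{0,\dots,p-1\}$, $\psi(y)=y$ if $y\le M$ and $\psi(y)=y-p$ otherwise. For $i=1,2$, $x_1^{(i)},\dots,x_n^{(i)}$ are real samples (not all equal) with mean $\bar x^{(i)}$, $s^{(i)}=\sqrt{\frac{1}{n-1}\sum_j(x_j^{(i)}-\bar x^{(i)})^2}$, and $z_j^{(i)}=(x_j^{(i)}-\bar x^{(i)})/s^{(i)}$; $\tilde z_j^{(i)}$ is a nearest element of $\mathbb{Q}_{(M,\delta)}$ to $z_j^{(i)}$, with $|z_j^{(i)}-\tilde z_j^{(i)}|\le\delta/2$. *)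

theory Defs
  imports Complex_Main "HOL-Computational_Algebra.Primes"
begin

definition Qset :: "int \<Rightarrow> real \<Rightarrow> real set" where
  "Qset M \<gamma> = {of_int x * \<gamma> | x. - M \<le> x \<and> x \<le> M}"

text \<open>F_p is represented by the integers {0..p-1}, arithmetic mod p.
  phi_gamma(x*gamma) = x mod p.\<close>
definition phi :: "int \<Rightarrow> int \<Rightarrow> real \<Rightarrow> real \<Rightarrow> int" where
  "phi p M \<gamma> q = (THE x. - M \<le> x \<and> x \<le> M \<and> q = of_int x * \<gamma>) mod p"

text \<open>psi on representatives y in {0..p-1}.\<close>
definition psi :: "int \<Rightarrow> int \<Rightarrow> int \<Rightarrow> int" where
  "psi p M y = (if y \<le> M then y else y - p)"

definition phi_inv :: "int \<Rightarrow> int \<Rightarrow> real \<Rightarrow> int \<Rightarrow> real" where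
  "phi_inv p M \<gamma> y = \<gamma> * of_int (psi p M y)"

definition mean :: "nat \<Rightarrow> (nat \<Rightarrow> real) \<Rightarrow> real" where
  "mean n x = (\<Sum>j=1..n. x j) / real n"

definition sdev :: "nat \<Rightarrow> (nat \<Rightarrow> real) \<Rightarrow> real" where
  "sdev n x = sqrt ((1 / (real n - 1)) * (\<Sum>j=1..n. (x j - mean n x)\<^sup>2))"

definition zscore :: "nat \<Rightarrow> (nat \<Rightarrow> real) \<Rightarrow> nat \<Rightarrow> real" where
  "zscore n x j = (x j - mean n x) / sdev n x"

end

theory Submission
  imports Defs
begin

text \<open>Write each rounded z-score as an integer multiple \<open>k\<^sub>i\<^sub>j \<delta>\<close> of \<open>\<delta>\<close>. The real sum of
  products is then \<open>\<delta>\<^sup>2 T\<close> with \<open>T = \<Sum>\<^sub>j k\<^sub>1\<^sub>j k\<^sub>2\<^sub>j\<close>, while the sum computed in \<open>\<bbbF>\<^sub>p\<close> is \<open>T mod p\<close>;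
  the centred lift \<open>\<psi>\<close> recovers \<open>T\<close> from \<open>T mod p\<close> as soon as \<open>|T| \<le> M\<close>. That bound holds
  because the exact z-scores of each sample have squared norm \<open>n - 1\<close>, so their inner product is
  at most \<open>n - 1\<close> in absolute value, and rounding moves each of the \<open>n\<close> products by at most
  \<open>\<delta>R + \<delta>\<^sup>2/4\<close>.\<close>

lemma sum_zscore_squares:
  fixes y :: "nat \<Rightarrow> real"
  assumes "n \<ge> 2" and nonconst: "\<exists>j\<in>{1..n}. \<exists>k\<in>{1..n}. y j \<noteq> y k"
  shows "(\<Sum>j=1..n. (zscore n y j)\<^sup>2) = real n - 1"
proof -
  define S where "S = (\<Sum>j=1..n. (y j - mean n y)\<^sup>2)"
  have "S \<noteq> 0"
  proof
    assume "S = 0"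
    then have "\<forall>j\<in>{1..n}. y j = mean n y"
      unfolding S_def by (subst (asm) sum_nonneg_eq_0_iff) auto
    with nonconst show False by auto
  qed
  have sdev_sq: "(sdev n y)\<^sup>2 = S / (real n - 1)"
    unfolding sdev_def S_def using \<open>n \<ge> 2\<close> by (simp add: sum_nonneg)
  have "(\<Sum>j=1..n. (zscore n y j)\<^sup>2) = S / (sdev n y)\<^sup>2"
    unfolding zscore_def S_def by (simp add: power_divide sum_divide_distrib)
  also have "\<dots> = real n - 1"
    using \<open>S \<noteq> 0\<close> sdev_sq \<open>n \<ge> 2\<close> by simp
  finally show ?thesis .
qed

lemma abs_sum_mult_le_sum_squares:
  fixes u v :: "'a \<Rightarrow> real"
  assumes "(\<Sum>j\<in>A. (u j)\<^sup>2) = s" and "(\<Sum>j\<in>A. (v j)\<^sup>2) = s"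
  shows "\<bar>\<Sum>j\<in>A. u j * v j\<bar> \<le> s"
proof -
  have "\<bar>\<Sum>j\<in>A. u j * v j\<bar> \<le> (\<Sum>j\<in>A. ((u j)\<^sup>2 + (v j)\<^sup>2) / 2)"
  proof (rule order_trans[OF sum_abs sum_mono])
    fix j
    have "0 \<le> (\<bar>u j\<bar> - \<bar>v j\<bar>)\<^sup>2" by simp
    then show "\<bar>u j * v j\<bar> \<le> ((u j)\<^sup>2 + (v j)\<^sup>2) / 2"
      by (simp add: power2_eq_square abs_mult algebra_simps)
  qed
  also have "\<dots> = s"
    using assms by (simp add: sum_divide_distrib[symmetric] sum.distrib)
  finally show ?thesis .
qed

lemma abs_mult_sub_mult_le:
  fixes a b a' b' e R :: real
  assumes "\<bar>a - a'\<bar> \<le> e" "\<bar>b - b'\<bar> \<le> e" "\<bar>a'\<bar> \<le> R" "\<bar>b'\<bar> \<le> R"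
  shows "\<bar>a' * b' - a * b\<bar> \<le> e * (2 * R + e)"
proof -
  have "\<bar>b\<bar> \<le> R + e" using assms(2,4) by linarith
  have "a' * b' - a * b = (a' - a) * b + a' * (b' - b)" by (simp add: algebra_simps)
  then have "\<bar>a' * b' - a * b\<bar> \<le> \<bar>a - a'\<bar> * \<bar>b\<bar> + \<bar>a'\<bar> * \<bar>b - b'\<bar>"
    by (metis abs_minus_commute abs_mult abs_triangle_ineq)
  also have "\<dots> \<le> e * (R + e) + R * e"
    using assms \<open>\<bar>b\<bar> \<le> R + e\<close> by (intro add_mono mult_mono) auto
  finally show ?thesis by (simp add: algebra_simps)
qed

lemma abs_sum_mult_approx_le:
  fixes u v u' v' :: "'a \<Rightarrow> real"
  assumes "(\<Sum>j\<in>A. (u j)\<^sup>2) = s" and "(\<Sum>j\<in>A. (v j)\<^sup>2) = s"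
    and "\<And>j. j \<in> A \<Longrightarrow> \<bar>u j - u' j\<bar> \<le> e" "\<And>j. j \<in> A \<Longrightarrow> \<bar>v j - v' j\<bar> \<le> e"
    and "\<And>j. j \<in> A \<Longrightarrow> \<bar>u' j\<bar> \<le> R" "\<And>j. j \<in> A \<Longrightarrow> \<bar>v' j\<bar> \<le> R"
  shows "\<bar>\<Sum>j\<in>A. u' j * v' j\<bar> \<le> s + real (card A) * (e * (2 * R + e))"
proof -
  have "\<bar>(\<Sum>j\<in>A. u' j * v' j) - (\<Sum>j\<in>A. u j * v j)\<bar> \<le> (\<Sum>j\<in>A. e * (2 * R + e))"
    unfolding sum_subtractf[symmetric]
  proof (rule order_trans[OF sum_abs sum_mono])
    fix j assume "j \<in> A"
    then show "\<bar>u' j * v' j - u j * v j\<bar> \<le> e * (2 * R + e)"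
      by (intro abs_mult_sub_mult_le) (simp_all add: assms)
  qed
  moreover have "\<bar>\<Sum>j\<in>A. u j * v j\<bar> \<le> s"
    using assms(1,2) by (rule abs_sum_mult_le_sum_squares)
  ultimately show ?thesis by simp
qed

lemma Qset_floor_divide:
  assumes "q \<in> Qset M \<gamma>" and "\<gamma> > 0"
  shows "q = of_int \<lfloor>q / \<gamma>\<rfloor> * \<gamma>" and "\<bar>\<lfloor>q / \<gamma>\<rfloor>\<bar> \<le> M"
  using assms unfolding Qset_def by auto

lemma phi_Qset:
  assumes "q \<in> Qset M \<gamma>" and "\<gamma> > 0"
  shows "phi p M \<gamma> q = \<lfloor>q / \<gamma>\<rfloor> mod p"
proof -
  have "(THE x. - M \<le> x \<and> x \<le> M \<and> q = of_int x * \<gamma>) = \<lfloor>q / \<gamma>\<rfloor>"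
    using Qset_floor_divide[OF assms] \<open>\<gamma> > 0\<close> by (intro the_equality) auto
  then show ?thesis unfolding phi_def by simp
qed

lemma psi_mod:
  fixes p M T :: int
  assumes "odd p" and "M = (p - 1) div 2" and "\<bar>T\<bar> \<le> M"
  shows "psi p M (T mod p) = T"
proof -
  have p: "p = 2 * M + 1" using assms(1,2) by presburger
  show ?thesis
  proof (cases "T \<ge> 0")
    case True
    then have "T mod p = T" using assms(3) p by (intro mod_pos_pos_trivial) auto
    then show ?thesis unfolding psi_def using assms(3) by simp
  next
    case False
    then have "(T + p) mod p = T + p" using assms(3) p by (intro mod_pos_pos_trivial) auto
    then show ?thesis unfolding psi_def using assms(3) p False by simp
  qed
qed

lemma phi_inv_mod:
  fixes p M T :: int
  assumes "odd p" and "M = (p - 1) div 2" and "\<bar>T\<bar> \<le> M"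
  shows "phi_inv p M \<gamma> (T mod p) = \<gamma> * of_int T"
  unfolding phi_inv_def psi_mod[OF assms] ..

lemma mod_sum_mult_mod:
  fixes a b :: "'a \<Rightarrow> int"
  shows "(\<Sum>j\<in>A. (a j mod p) * (b j mod p)) mod p = (\<Sum>j\<in>A. a j * b j) mod p"
proof -
  have "(\<Sum>j\<in>A. (a j mod p) * (b j mod p)) mod p
      = (\<Sum>j\<in>A. (a j mod p) * (b j mod p) mod p) mod p"
    by (simp add: mod_sum_eq)
  also have "\<dots> = (\<Sum>j\<in>A. a j * b j mod p) mod p"
    by (simp add: mod_mult_eq)
  finally show ?thesis by (simp add: mod_sum_eq)
qed

lemma sum_mult_Qset:
  assumes "\<gamma> > 0" and "\<And>j. j \<in> A \<Longrightarrow> u j \<in> Qset M \<gamma>" "\<And>j. j \<in> A \<Longrightarrow> v j \<in> Qset M \<gamma>"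
  shows "(\<Sum>j\<in>A. u j * v j) = \<gamma>\<^sup>2 * of_int (\<Sum>j\<in>A. \<lfloor>u j / \<gamma>\<rfloor> * \<lfloor>v j / \<gamma>\<rfloor>)"
  unfolding of_int_sum sum_distrib_left
proof (rule sum.cong)
  fix j assume "j \<in> A"
  define a b where "a = \<lfloor>u j / \<gamma>\<rfloor>" and "b = \<lfloor>v j / \<gamma>\<rfloor>"
  have "u j = of_int a * \<gamma>" "v j = of_int b * \<gamma>"
    unfolding a_def b_def using Qset_floor_divide(1) assms \<open>j \<in> A\<close> by blast+
  then have "u j * v j = \<gamma>\<^sup>2 * of_int (a * b)"
    by (simp add: power2_eq_square)
  then show "u j * v j = \<gamma>\<^sup>2 * of_int (\<lfloor>u j / \<gamma>\<rfloor> * \<lfloor>v j / \<gamma>\<rfloor>)"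
    unfolding a_def b_def .
qed simp

lemma sum_phi_mult_Qset_mod:
  assumes "\<gamma> > 0" and "\<And>j. j \<in> A \<Longrightarrow> u j \<in> Qset M \<gamma>" "\<And>j. j \<in> A \<Longrightarrow> v j \<in> Qset M \<gamma>"
  shows "(\<Sum>j\<in>A. phi p M \<gamma> (u j) * phi p M \<gamma> (v j)) mod p
    = (\<Sum>j\<in>A. \<lfloor>u j / \<gamma>\<rfloor> * \<lfloor>v j / \<gamma>\<rfloor>) mod p"
proof -
  have "(\<Sum>j\<in>A. phi p M \<gamma> (u j) * phi p M \<gamma> (v j))
      = (\<Sum>j\<in>A. (\<lfloor>u j / \<gamma>\<rfloor> mod p) * (\<lfloor>v j / \<gamma>\<rfloor> mod p))"
    using assms by (intro sum.cong) (simp_all add: phi_Qset)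
  then show ?thesis by (simp add: mod_sum_mult_mod)
qed

theorem lemma3:
  fixes n p :: nat and M :: int and \<delta> R :: real
    and x :: "nat \<Rightarrow> nat \<Rightarrow> real" and zt :: "nat \<Rightarrow> nat \<Rightarrow> real"
  assumes n2: "n \<ge> 2"
    and pprime: "prime p" and p2: "p > 2"
    and Mdef: "M = (int p - 1) div 2"
    and dpos: "\<delta> > 0"
    and notconst: "\<And>i. i \<in> {1,2} \<Longrightarrow> \<exists>j\<in>{1..n}. \<exists>k\<in>{1..n}. x i j \<noteq> x i k"
    and ztQ: "\<And>i j. i \<in> {1,2} \<Longrightarrow> j \<in> {1..n} \<Longrightarrow> zt i j \<in> Qset M \<delta>"
    and nearest: "\<And>i j q. i \<in> {1,2} \<Longrightarrow> j \<in> {1..n} \<Longrightarrow> q \<in> Qset M \<delta> \<Longrightarrow>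
                    \<bar>zscore n (x i) j - zt i j\<bar> \<le> \<bar>zscore n (x i) j - q\<bar>"
    and close: "\<And>i j. i \<in> {1,2} \<Longrightarrow> j \<in> {1..n} \<Longrightarrow> \<bar>zscore n (x i) j - zt i j\<bar> \<le> \<delta> / 2"
    and Rbound: "\<And>i j. i \<in> {1,2} \<Longrightarrow> j \<in> {1..n} \<Longrightarrow> \<bar>zt i j\<bar> \<le> R"
    and Rle: "R \<le> real n / \<delta>"
    and Mbig: "real_of_int M \<ge> (real n - 1) / \<delta>\<^sup>2 + real n * (R / \<delta> + 1 / 4)"
  shows "(1 / (real n - 1)) * (\<Sum>j=1..n. zt 1 j * zt 2 j)
         = (1 / (real n - 1)) * phi_inv (int p) M (\<delta>\<^sup>2)
             ((\<Sum>j=1..n. phi (int p) M \<delta> (zt 1 j) * phi (int p) M \<delta> (zt 2 j)) mod int p)"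
proof -
  define T where "T = (\<Sum>j=1..n. \<lfloor>zt 1 j / \<delta>\<rfloor> * \<lfloor>zt 2 j / \<delta>\<rfloor>)"
  have sum_zt: "(\<Sum>j=1..n. zt 1 j * zt 2 j) = \<delta>\<^sup>2 * of_int T"
    unfolding T_def using dpos ztQ by (intro sum_mult_Qset) auto
  have sum_phi: "(\<Sum>j=1..n. phi (int p) M \<delta> (zt 1 j) * phi (int p) M \<delta> (zt 2 j)) mod int p
      = T mod int p"
    unfolding T_def using dpos ztQ by (intro sum_phi_mult_Qset_mod) auto
  have "\<bar>\<Sum>j=1..n. zt 1 j * zt 2 j\<bar>
      \<le> (real n - 1) + real (card {1..n}) * (\<delta> / 2 * (2 * R + \<delta> / 2))"
    by (rule abs_sum_mult_approx_le[where u = "zscore n (x 1)" and v = "zscore n (x 2)"],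
        (rule sum_zscore_squares[OF n2 notconst] close Rbound; simp)+)
  also have "\<dots> = \<delta>\<^sup>2 * ((real n - 1) / \<delta>\<^sup>2 + real n * (R / \<delta> + 1 / 4))"
    using dpos by (simp add: field_simps power2_eq_square)
  also have "\<dots> \<le> \<delta>\<^sup>2 * M"
    using Mbig dpos by simp
  finally have "\<bar>T\<bar> \<le> M"
    unfolding sum_zt using dpos by (simp add: abs_mult)
  moreover have "odd (int p)"
    using prime_odd_nat[OF pprime] p2 by simp
  ultimately show ?thesis
    unfolding sum_phi sum_zt using phi_inv_mod Mdef by simp
qed

end
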